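(* Let $P$ be a pattern and let $\mathcal{O}$ be the list of schedules output by the schedule generation procedure described in the context (with any fixed iteration orders). Then (i) no two distinct schedules in $\mathcal{O}$ are equivalent, and (ii) every schedule for $P$ is equivalent to some schedule in $\mathcal{O}$. That is, $\mathcal{O}$ contains exactly one representative of each equivalence class of schedules for $P$.
   Context: A pattern $P$ is a finite simple connected graph on $n$ labeled vertices; $\mathrm{Aut}(P)$ is its automorphism group (bijections $V(P)\to V(P)$ preserving adjacency and non-adjacency). A schedule for $P$ is a sequence $S=(S[0],\dots,S[n-1])$ listing every vertex of $P$ exactly once such that each $S[k]$ with $k\ge 1$ is adjacent in $P$ to some $S[j]$ with $j<k$. Two schedules $S,S'$ are equivalent if there is $\phi\in\mathrm{Aut}(P)$ with $\phi(S[i])=S'[i]$ for all $i$. Schedule generation procedure: call $\mathrm{Gen}((),\mathrm{Aut}(P))$, where $\mathrm{Gen}(s,A)$, for a partial sequence $s$ of distinct vertices and a set $A$ of automorphisms (in each call $A$ is exactly the set of automorphisms fixing every vertex of $s$), does the following. If $s$ contains all vertices of $P$, output $s$ and return. Otherwise let $C=V(P)$ if $s$ is empty, and otherwise let $C$ be the set of vertices not in $s$ that are adjacent to at least one vertex of $s$. Initialize a set $\mathrm{processed}=\emptyset$ (local to this call) and iterate over $v\in C$ in some fixed order: if $v\in\mathrm{processed}$, skip $v$; otherwise, for every $x\in A$ with $x(v)\neq v$ add $x(v)$ to $\mathrm{processed}$, and call $\mathrm{Gen}(s+(v),\{x\in A : x(v)=v\})$. *)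

theory Defs
  imports Main
begin

definition pattern :: "'a set \<Rightarrow> ('a \<Rightarrow> 'a \<Rightarrow> bool) \<Rightarrow> bool" where
  "pattern V E \<longleftrightarrow> finite V \<and> V \<noteq> {}
     \<and> (\<forall>u v. E u v \<longrightarrow> u \<in> V \<and> v \<in> V)
     \<and> (\<forall>u v. E u v \<longrightarrow> E v u)
     \<and> (\<forall>u. \<not> E u u)
     \<and> (\<forall>u\<in>V. \<forall>v\<in>V. E\<^sup>*\<^sup>* u v)"

definition Aut :: "'a set \<Rightarrow> ('a \<Rightarrow> 'a \<Rightarrow> bool) \<Rightarrow> ('a \<Rightarrow> 'a) set" where
  "Aut V E = {f. bij_betw f V V \<and> (\<forall>u\<in>V. \<forall>w\<in>V. E u w \<longleftrightarrow> E (f u) (f w))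
                \<and> (\<forall>u. u \<notin> V \<longrightarrow> f u = u)}"

definition is_schedule :: "'a set \<Rightarrow> ('a \<Rightarrow> 'a \<Rightarrow> bool) \<Rightarrow> 'a list \<Rightarrow> bool" where
  "is_schedule V E S \<longleftrightarrow> distinct S \<and> set S = V
     \<and> (\<forall>k. 1 \<le> k \<and> k < length S \<longrightarrow> (\<exists>j<k. E (S ! j) (S ! k)))"

definition sched_equiv :: "'a set \<Rightarrow> ('a \<Rightarrow> 'a \<Rightarrow> bool) \<Rightarrow> 'a list \<Rightarrow> 'a list \<Rightarrow> bool" where
  "sched_equiv V E S S' \<longleftrightarrow> length S = length S'
     \<and> (\<exists>\<phi>\<in>Aut V E. \<forall>i<length S. \<phi> (S ! i) = S' ! i)"

definition cand :: "'a set \<Rightarrow> ('a \<Rightarrow> 'a \<Rightarrow> bool) \<Rightarrow> 'a list \<Rightarrow> 'a set" where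
  "cand V E s = (if s = [] then V else {v \<in> V. v \<notin> set s \<and> (\<exists>u\<in>set s. E u v)})"

text \<open>An iteration order: for every call (identified by its partial sequence s),
  a duplicate-free enumeration of the candidate set.\<close>
definition valid_order :: "'a set \<Rightarrow> ('a \<Rightarrow> 'a \<Rightarrow> bool) \<Rightarrow> ('a list \<Rightarrow> 'a list) \<Rightarrow> bool" where
  "valid_order V E ord \<longleftrightarrow> (\<forall>s. distinct (ord s) \<and> set (ord s) = cand V E s)"

text \<open>The inner loop of Gen over the candidates, with recursive call g.\<close>
fun gen_loop :: "('a list \<Rightarrow> ('a \<Rightarrow> 'a) set \<Rightarrow> 'a list list) \<Rightarrow> ('a \<Rightarrow> 'a) set \<Rightarrow> 'a list
                 \<Rightarrow> 'a set \<Rightarrow> 'a list \<Rightarrow> 'a list list" where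
  "gen_loop g A s proc [] = []"
| "gen_loop g A s proc (v # vs) =
     (if v \<in> proc then gen_loop g A s proc vs
      else g (s @ [v]) {x \<in> A. x v = v}
           @ gen_loop g A s (proc \<union> {x v | x. x \<in> A \<and> x v \<noteq> v}) vs)"

text \<open>Gen with a fuel argument (recursion depth bound); fuel card V suffices.\<close>
primrec gen :: "'a set \<Rightarrow> ('a list \<Rightarrow> 'a list) \<Rightarrow> nat \<Rightarrow> 'a list \<Rightarrow> ('a \<Rightarrow> 'a) set \<Rightarrow> 'a list list" where
  "gen V ord 0 s A = (if V \<subseteq> set s then [s] else [])"
| "gen V ord (Suc k) s A = (if V \<subseteq> set s then [s] else gen_loop (gen V ord k) A s {} (ord s))"

definition gen_output :: "'a set \<Rightarrow> ('a \<Rightarrow> 'a \<Rightarrow> bool) \<Rightarrow> ('a list \<Rightarrow> 'a list) \<Rightarrow> 'a list list" where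
  "gen_output V E ord = gen V ord (card V) [] (Aut V E)"

end

theory Submission
  imports Defs "HOL-Library.Sublist"
begin

text \<open>The call Gen(s, A), where A is the pointwise stabiliser of s in Aut(P), outputs exactly one
  representative of each equivalence class of schedules extending s; this is proved by induction on
  the number of vertices missing from s. The loop treats the candidates orbit by orbit under A:
  a schedule through a candidate u in the orbit of the first unprocessed candidate v is carried by
  an automorphism fixing s to a schedule through v, while schedules through v and through a
  candidate w outside its orbit are inequivalent, because an equivalence between them fixes s
  pointwise and maps v to w.\<close>

subsection \<open>Schedules\<close>

definition connected_order :: "('a \<Rightarrow> 'a \<Rightarrow> bool) \<Rightarrow> 'a list \<Rightarrow> bool" where
  "connected_order E s \<longleftrightarrow> (\<forall>k. 1 \<le> k \<and> k < length s \<longrightarrow> (\<exists>j<k. E (s ! j) (s ! k)))"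

lemma is_schedule_iff: "is_schedule V E s \<longleftrightarrow> distinct s \<and> set s = V \<and> connected_order E s"
  unfolding is_schedule_def connected_order_def ..

lemma is_schedule_distinct: "is_schedule V E S \<Longrightarrow> distinct S"
  and is_schedule_set: "is_schedule V E S \<Longrightarrow> set S = V"
  unfolding is_schedule_def by simp_all

lemma connected_order_snoc:
  assumes s: "connected_order E s" and v: "v \<in> cand V E s"
  shows "connected_order E (s @ [v])"
  unfolding connected_order_def
proof (intro allI impI)
  fix k assume k: "1 \<le> k \<and> k < length (s @ [v])"
  show "\<exists>j<k. E ((s @ [v]) ! j) ((s @ [v]) ! k)"
  proof (cases "k < length s")
    case True
    then obtain j where j: "j < k" "E (s ! j) (s ! k)"
      using s k unfolding connected_order_def by blast
    moreover have "(s @ [v]) ! j = s ! j" "(s @ [v]) ! k = s ! k"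
      using j(1) True by (simp_all add: nth_append)
    ultimately show ?thesis by auto
  next
    case False
    then have k_last: "k = length s" and "s \<noteq> []"
      using k by auto
    then obtain u where "u \<in> set s" "E u v"
      using v unfolding cand_def by auto
    then obtain j where "j < length s" "E (s ! j) v"
      by (auto simp: in_set_conv_nth)
    moreover have "(s @ [v]) ! j = s ! j" "(s @ [v]) ! k = v"
      using \<open>j < length s\<close> k_last by (simp_all add: nth_append)
    ultimately show ?thesis
      using k_last by auto
  qed
qed

lemma is_schedule_prefix_next_cand:
  assumes S: "is_schedule V E S" and pre: "prefix s S" and unfinished: "\<not> V \<subseteq> set s"
  shows "\<exists>u\<in>cand V E s. prefix (s @ [u]) S"
proof -
  obtain t where t: "S = s @ t"
    using pre unfolding prefix_def by blast
  with is_schedule_set[OF S] unfinished have "t \<noteq> []"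
    by auto
  then obtain u t' where S_eq: "S = s @ u # t'"
    using t by (cases t) auto
  have "u \<in> V" "u \<notin> set s"
    using is_schedule_set[OF S] is_schedule_distinct[OF S] S_eq by auto
  moreover have "\<exists>u'\<in>set s. E u' u" if "s \<noteq> []"
  proof -
    have "1 \<le> length s" "length s < length S"
      using that S_eq by (auto simp: Suc_le_eq)
    then obtain j where "j < length s" "E (S ! j) (S ! length s)"
      using S unfolding is_schedule_def by blast
    then show ?thesis
      using S_eq by (auto simp: nth_append)
  qed
  ultimately have "u \<in> cand V E s"
    unfolding cand_def by auto
  then show ?thesis
    using S_eq by auto
qed

subsection \<open>Automorphisms\<close>

definition Stab :: "'a set \<Rightarrow> ('a \<Rightarrow> 'a \<Rightarrow> bool) \<Rightarrow> 'a list \<Rightarrow> ('a \<Rightarrow> 'a) set" where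
  "Stab V E s = {x \<in> Aut V E. \<forall>u\<in>set s. x u = u}"

definition aut_inv :: "'a set \<Rightarrow> ('a \<Rightarrow> 'a) \<Rightarrow> 'a \<Rightarrow> 'a" where
  "aut_inv V f u = (if u \<in> V then inv_into V f u else u)"

lemma Aut_in: "f \<in> Aut V E \<Longrightarrow> u \<in> V \<Longrightarrow> f u \<in> V"
  unfolding Aut_def using bij_betwE by blast

lemma Aut_adj: "f \<in> Aut V E \<Longrightarrow> u \<in> V \<Longrightarrow> w \<in> V \<Longrightarrow> E (f u) (f w) \<longleftrightarrow> E u w"
  unfolding Aut_def by blast

lemma id_in_Aut: "id \<in> Aut V E"
  unfolding Aut_def by auto

lemma comp_in_Aut:
  assumes f: "f \<in> Aut V E" and g: "g \<in> Aut V E"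
  shows "g \<circ> f \<in> Aut V E"
proof -
  have "bij_betw (g \<circ> f) V V"
    using f g unfolding Aut_def using bij_betw_trans by blast
  moreover have "E ((g \<circ> f) u) ((g \<circ> f) w) \<longleftrightarrow> E u w" if "u \<in> V" "w \<in> V" for u w
    using Aut_adj[OF g Aut_in[OF f that(1)] Aut_in[OF f that(2)]] Aut_adj[OF f that] by simp
  moreover have "\<forall>u. u \<notin> V \<longrightarrow> (g \<circ> f) u = u"
    using f g unfolding Aut_def by auto
  ultimately show ?thesis unfolding Aut_def by auto
qed

lemma aut_inv_apply: "f \<in> Aut V E \<Longrightarrow> aut_inv V f (f u) = u"
  unfolding Aut_def aut_inv_def
  by (cases "u \<in> V") (auto simp: bij_betw_imp_inj_on bij_betwE)

lemma apply_aut_inv: "f \<in> Aut V E \<Longrightarrow> f (aut_inv V f u) = u"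
  unfolding Aut_def aut_inv_def
  by (auto simp: bij_betw_imp_surj_on f_inv_into_f)

lemma aut_inv_in_Aut:
  assumes f: "f \<in> Aut V E"
  shows "aut_inv V f \<in> Aut V E"
proof -
  have "bij_betw (inv_into V f) V V"
    using f bij_betw_inv_into unfolding Aut_def by blast
  then have bij: "bij_betw (aut_inv V f) V V"
    by (rule bij_betw_cong[THEN iffD1, rotated]) (simp add: aut_inv_def)
  have "E (aut_inv V f u) (aut_inv V f w) \<longleftrightarrow> E u w" if "u \<in> V" "w \<in> V" for u w
    using Aut_adj[OF f, of "aut_inv V f u" "aut_inv V f w"] bij that
    by (simp add: apply_aut_inv[OF f] bij_betwE)
  then show ?thesis
    using bij unfolding Aut_def aut_inv_def by auto
qed

lemma aut_inv_in_Stab: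
  assumes "f \<in> Stab V E s"
  shows "aut_inv V f \<in> Stab V E s"
proof -
  have f: "f \<in> Aut V E" and fix_s: "\<forall>u\<in>set s. f u = u"
    using assms unfolding Stab_def by auto
  have "aut_inv V f u = u" if "u \<in> set s" for u
    using aut_inv_apply[OF f, of u] fix_s that by simp
  then show ?thesis
    using aut_inv_in_Aut[OF f] unfolding Stab_def by auto
qed

subsection \<open>Equivalence of schedules\<close>

lemma sched_equiv_refl: "sched_equiv V E S S"
  unfolding sched_equiv_def by (auto intro!: bexI[of _ id] id_in_Aut)

lemma sched_equiv_sym:
  assumes "sched_equiv V E S S'"
  shows "sched_equiv V E S' S"
proof -
  obtain \<phi> where \<phi>: "\<phi> \<in> Aut V E" "\<forall>i<length S. \<phi> (S ! i) = S' ! i" "length S = length S'"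
    using assms unfolding sched_equiv_def by blast
  have "aut_inv V \<phi> (S' ! i) = S ! i" if "i < length S'" for i
    using that \<phi>(2,3) aut_inv_apply[OF \<phi>(1), of "S ! i"] by simp
  then show ?thesis
    unfolding sched_equiv_def using \<phi>(3) aut_inv_in_Aut[OF \<phi>(1)]
    by (intro conjI bexI[of _ "aut_inv V \<phi>"]) simp_all
qed

lemma sched_equiv_trans:
  assumes "sched_equiv V E S T" and "sched_equiv V E T U"
  shows "sched_equiv V E S U"
proof -
  obtain f where f: "f \<in> Aut V E" "\<forall>i<length S. f (S ! i) = T ! i" "length S = length T"
    using assms(1) unfolding sched_equiv_def by blast
  obtain g where g: "g \<in> Aut V E" "\<forall>i<length T. g (T ! i) = U ! i" "length T = length U"
    using assms(2) unfolding sched_equiv_def by blast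
  show ?thesis
    unfolding sched_equiv_def using f g comp_in_Aut[OF f(1) g(1)]
    by (intro conjI bexI[of _ "g \<circ> f"]) auto
qed

lemma sched_equiv_map: "x \<in> Aut V E \<Longrightarrow> sched_equiv V E S (map x S)"
  unfolding sched_equiv_def by auto

lemma is_schedule_map:
  assumes x: "x \<in> Aut V E" and S: "is_schedule V E S"
  shows "is_schedule V E (map x S)"
proof -
  have b: "bij_betw x V V" and setS: "set S = V" and dS: "distinct S"
    using x S unfolding Aut_def is_schedule_def by auto
  have "\<exists>j<k. E (map x S ! j) (map x S ! k)" if k: "1 \<le> k" "k < length S" for k
  proof -
    obtain j where j: "j < k" "E (S ! j) (S ! k)"
      using S k unfolding is_schedule_def by blast
    moreover have "S ! j \<in> V" "S ! k \<in> V"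
      using j k setS by auto
    ultimately have "E (x (S ! j)) (x (S ! k))"
      using Aut_adj[OF x] by simp
    then show ?thesis
      using j k by auto
  qed
  then show ?thesis
    using b setS dS unfolding is_schedule_def
    by (simp add: distinct_map bij_betw_imp_inj_on bij_betw_imp_surj_on)
qed

lemma sched_equiv_common_prefix:
  assumes "prefix (s @ [v]) S" and "prefix (s @ [w]) S'" and "sched_equiv V E S S'"
  shows "\<exists>\<phi>\<in>Stab V E s. \<phi> v = w"
proof -
  obtain t t' where S: "S = s @ v # t" and S': "S' = s @ w # t'"
    using assms(1,2) unfolding prefix_def by auto
  obtain \<phi> where \<phi>: "\<phi> \<in> Aut V E" and maps: "\<forall>i<length S. \<phi> (S ! i) = S' ! i"
    using assms(3) unfolding sched_equiv_def by blast
  have "\<phi> u = u" if u: "u \<in> set s" for u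
  proof -
    obtain i where "i < length s" "s ! i = u"
      using u by (auto simp: in_set_conv_nth)
    then show ?thesis
      using maps[rule_format, of i] S S' by (simp add: nth_append)
  qed
  moreover have "\<phi> v = w"
    using maps[rule_format, of "length s"] S S' by simp
  ultimately show ?thesis
    using \<phi> unfolding Stab_def by auto
qed

lemma Stab_move_back:
  assumes x: "x \<in> Stab V E s" and S: "is_schedule V E S" and pre: "prefix (s @ [x v]) S"
  shows "\<exists>S'. is_schedule V E S' \<and> prefix (s @ [v]) S' \<and> sched_equiv V E S S'"
proof -
  let ?y = "aut_inv V x"
  obtain t where t: "S = s @ x v # t"
    using pre unfolding prefix_def by auto
  have "?y \<in> Stab V E s"
    by (rule aut_inv_in_Stab[OF x])
  then have yA: "?y \<in> Aut V E" and "map ?y s = s"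
    unfolding Stab_def by (auto intro: map_idI)
  moreover have "?y (x v) = v"
    using x aut_inv_apply[of x V E v] unfolding Stab_def by simp
  ultimately have "map ?y S = s @ v # map ?y t"
    using t by simp
  then have "prefix (s @ [v]) (map ?y S)"
    by simp
  then show ?thesis
    using is_schedule_map[OF yA S] sched_equiv_map[OF yA] by blast
qed

subsection \<open>Transversals of schedule classes\<close>

definition schedule_transversal ::
    "'a set \<Rightarrow> ('a \<Rightarrow> 'a \<Rightarrow> bool) \<Rightarrow> ('a list \<Rightarrow> bool) \<Rightarrow> 'a list list \<Rightarrow> bool" where
  "schedule_transversal V E P L \<longleftrightarrow>
     (\<forall>S\<in>set L. is_schedule V E S \<and> P S)
     \<and> sorted_wrt (\<lambda>S S'. \<not> sched_equiv V E S S') L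
     \<and> (\<forall>S. is_schedule V E S \<and> P S \<longrightarrow> (\<exists>S'\<in>set L. sched_equiv V E S S'))"

lemma schedule_transversal_single:
  assumes s: "is_schedule V E s"
  shows "schedule_transversal V E (prefix s) [s]"
proof -
  have "S = s" if S: "is_schedule V E S" "prefix s S" for S
  proof -
    obtain t where "S = s @ t"
      using S(2) unfolding prefix_def by blast
    moreover have "length S = length s"
      using is_schedule_distinct[OF S(1)] is_schedule_set[OF S(1)]
        is_schedule_distinct[OF s] is_schedule_set[OF s] distinct_card[of S] distinct_card[of s]
      by simp
    ultimately show ?thesis by simp
  qed
  then show ?thesis
    unfolding schedule_transversal_def using s sched_equiv_refl by auto
qed

lemma schedule_transversal_append:
  assumes "schedule_transversal V E P L" and "schedule_transversal V E Q M"
    and "\<And>S S'. P S \<Longrightarrow> Q S' \<Longrightarrow> \<not> sched_equiv V E S S'"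
  shows "schedule_transversal V E (\<lambda>S. P S \<or> Q S) (L @ M)"
proof -
  have "\<forall>S\<in>set L. P S" "\<forall>S\<in>set M. Q S"
    using assms(1,2) unfolding schedule_transversal_def by auto
  then have "sorted_wrt (\<lambda>S S'. \<not> sched_equiv V E S S') (L @ M)"
    using assms unfolding schedule_transversal_def sorted_wrt_append by auto
  then show ?thesis
    using assms(1,2) unfolding schedule_transversal_def by auto
qed

lemma schedule_transversal_saturate:
  assumes L: "schedule_transversal V E P L"
    and PQ: "\<And>S. P S \<Longrightarrow> Q S"
    and QP: "\<And>S. is_schedule V E S \<Longrightarrow> Q S \<Longrightarrow>
               \<exists>S'. is_schedule V E S' \<and> P S' \<and> sched_equiv V E S S'"
  shows "schedule_transversal V E Q L"
proof -
  have "\<exists>S''\<in>set L. sched_equiv V E S S''" if S: "is_schedule V E S" "Q S" for S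
  proof -
    obtain S' where S': "is_schedule V E S'" "P S'" "sched_equiv V E S S'"
      using QP[OF S] by blast
    then obtain S'' where "S'' \<in> set L" "sched_equiv V E S' S''"
      using L unfolding schedule_transversal_def by blast
    then show ?thesis
      using sched_equiv_trans[OF S'(3)] by blast
  qed
  then show ?thesis
    using L PQ unfolding schedule_transversal_def by blast
qed

lemma schedule_transversal_nth:
  assumes "schedule_transversal V E P L" and "i < length L" "j < length L" "i \<noteq> j"
  shows "\<not> sched_equiv V E (L ! i) (L ! j)"
proof -
  have inequiv: "\<not> sched_equiv V E (L ! i') (L ! j')" if "i' < j'" "j' < length L" for i' j'
    using assms(1) that unfolding schedule_transversal_def sorted_wrt_iff_nth_less by blast
  show ?thesis
  proof (cases "i < j")
    case True
    then show ?thesis using inequiv assms(3) by blast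
  next
    case False
    then have "j < i" using assms(4) by simp
    then show ?thesis using inequiv assms(2) sched_equiv_sym by blast
  qed
qed

subsection \<open>The generation procedure\<close>

lemma schedule_transversal_gen_loop_step:
  fixes A :: "('a \<Rightarrow> 'a) set" and v :: 'a
  defines "orb \<equiv> {x v | x. x \<in> A \<and> x v \<noteq> v}"
  assumes A: "A = Stab V E s" and v: "v \<notin> set vs" "v \<notin> proc"
    and L: "schedule_transversal V E (prefix (s @ [v])) L"
    and M: "schedule_transversal V E (\<lambda>S. \<exists>w\<in>set vs - (proc \<union> orb). prefix (s @ [w]) S) M"
  shows "schedule_transversal V E (\<lambda>S. \<exists>u\<in>set (v # vs) - proc. prefix (s @ [u]) S) (L @ M)"
proof -
  have disjoint: "\<not> sched_equiv V E S S'"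
    if S: "prefix (s @ [v]) S" and S': "\<exists>w\<in>set vs - (proc \<union> orb). prefix (s @ [w]) S'" for S S'
  proof
    assume equiv: "sched_equiv V E S S'"
    obtain w where w: "w \<in> set vs" "w \<notin> orb" "prefix (s @ [w]) S'"
      using S' by blast
    obtain \<phi> where "\<phi> \<in> A" "\<phi> v = w"
      using sched_equiv_common_prefix[OF S w(3) equiv] A by blast
    moreover have "w \<noteq> v"
      using w(1) v(1) by auto
    ultimately show False
      using w(2) unfolding orb_def by blast
  qed
  have covers: "\<exists>S'. is_schedule V E S' \<and>
      (prefix (s @ [v]) S' \<or> (\<exists>w\<in>set vs - (proc \<union> orb). prefix (s @ [w]) S'))
      \<and> sched_equiv V E S S'"
    if S: "is_schedule V E S" and u: "u \<in> set (v # vs) - proc" "prefix (s @ [u]) S" for S u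
  proof (cases "u \<in> orb")
    case True
    then obtain x where "x \<in> Stab V E s" "u = x v"
      using A unfolding orb_def by blast
    then show ?thesis
      using Stab_move_back[of x V E s S v] S u(2) by blast
  next
    case False
    then have "u = v \<or> u \<in> set vs - (proc \<union> orb)"
      using u(1) by auto
    then show ?thesis
      using S u(2) sched_equiv_refl by blast
  qed
  show ?thesis
  proof (rule schedule_transversal_saturate[OF schedule_transversal_append[OF L M disjoint]])
    show "\<exists>u\<in>set (v # vs) - proc. prefix (s @ [u]) S"
      if "prefix (s @ [v]) S \<or> (\<exists>w\<in>set vs - (proc \<union> orb). prefix (s @ [w]) S)" for S
      using that v(2) by auto
    show "\<exists>S'. is_schedule V E S' \<and>
        (prefix (s @ [v]) S' \<or> (\<exists>w\<in>set vs - (proc \<union> orb). prefix (s @ [w]) S'))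
        \<and> sched_equiv V E S S'"
      if "is_schedule V E S" "\<exists>u\<in>set (v # vs) - proc. prefix (s @ [u]) S" for S
      using that covers by blast
  qed
qed

lemma schedule_transversal_gen_loop:
  assumes A: "A = Stab V E s" and "distinct vs"
    and rec: "\<forall>v\<in>set vs. schedule_transversal V E (prefix (s @ [v])) (g (s @ [v]) {x \<in> A. x v = v})"
  shows "schedule_transversal V E (\<lambda>S. \<exists>u\<in>set vs - proc. prefix (s @ [u]) S)
           (gen_loop g A s proc vs)"
  using assms(2,3)
proof (induction vs arbitrary: proc)
  case Nil
  then show ?case unfolding schedule_transversal_def by simp
next
  case (Cons v vs)
  show ?case
  proof (cases "v \<in> proc")
    case True
    then have "set (v # vs) - proc = set vs - proc" by auto
    then show ?thesis
      using True Cons by simp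
  next
    case False
    then show ?thesis
      using schedule_transversal_gen_loop_step[OF A] Cons by simp
  qed
qed

lemma schedule_transversal_gen:
  assumes fin: "finite V" and ord: "valid_order V E ord"
  shows "distinct s \<Longrightarrow> set s \<subseteq> V \<Longrightarrow> length s + k = card V \<Longrightarrow> connected_order E s
    \<Longrightarrow> A = Stab V E s \<Longrightarrow> schedule_transversal V E (prefix s) (gen V ord k s A)"
proof (induction k arbitrary: s A)
  case 0
  then have "set s = V"
    using card_subset_eq[OF fin] distinct_card[of s] by simp
  moreover have "is_schedule V E s"
    using 0 calculation by (simp add: is_schedule_iff)
  ultimately show ?case
    using schedule_transversal_single by simp
next
  case (Suc k)
  have "card V \<le> length s" if "V \<subseteq> set s"
    using card_mono[OF _ that] distinct_card[OF Suc.prems(1)] by simp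
  then have unfinished: "\<not> V \<subseteq> set s"
    using Suc.prems(3) by linarith
  have rec: "schedule_transversal V E (prefix (s @ [v])) (gen V ord k (s @ [v]) {x \<in> A. x v = v})"
    if "v \<in> cand V E s" for v
  proof -
    have "v \<in> V" "v \<notin> set s"
      using that unfolding cand_def by (auto split: if_splits)
    moreover have "{x \<in> A. x v = v} = Stab V E (s @ [v])"
      using Suc.prems(5) unfolding Stab_def by auto
    ultimately show ?thesis
      using Suc.IH[of "s @ [v]"] Suc.prems connected_order_snoc[OF Suc.prems(4) that] by simp
  qed
  have loop: "schedule_transversal V E (\<lambda>S. \<exists>u\<in>cand V E s. prefix (s @ [u]) S)
      (gen_loop (gen V ord k) A s {} (ord s))"
    using schedule_transversal_gen_loop[OF Suc.prems(5), of "ord s" "gen V ord k" "{}"] ord rec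
    unfolding valid_order_def by simp
  have out: "gen V ord (Suc k) s A = gen_loop (gen V ord k) A s {} (ord s)"
    using unfinished by simp
  show ?case
    unfolding out
  proof (rule schedule_transversal_saturate[OF loop])
    show "prefix s S" if "\<exists>u\<in>cand V E s. prefix (s @ [u]) S" for S
      using that by (auto dest: append_prefixD)
    show "\<exists>S'. is_schedule V E S' \<and> (\<exists>u\<in>cand V E s. prefix (s @ [u]) S')
        \<and> sched_equiv V E S S'" if "is_schedule V E S" "prefix s S" for S
      using is_schedule_prefix_next_cand[OF that unfinished] that sched_equiv_refl by blast
  qed
qed

theorem theorem3:
  fixes V :: "'a set" and E :: "'a \<Rightarrow> 'a \<Rightarrow> bool" and ord :: "'a list \<Rightarrow> 'a list"
  assumes "pattern V E"
    and "valid_order V E ord"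
  defines "Out \<equiv> gen_output V E ord"
  shows "(\<forall>S\<in>set Out. is_schedule V E S)
    \<and> (\<forall>i j. i < length Out \<and> j < length Out \<and> i \<noteq> j \<longrightarrow> \<not> sched_equiv V E (Out ! i) (Out ! j))
    \<and> (\<forall>S. is_schedule V E S \<longrightarrow> (\<exists>S'\<in>set Out. sched_equiv V E S S'))"
proof -
  have "finite V"
    using assms(1) unfolding pattern_def by simp
  moreover have "Aut V E = Stab V E []"
    unfolding Stab_def by simp
  ultimately have Out: "schedule_transversal V E (prefix []) Out"
    unfolding Out_def gen_output_def
    using schedule_transversal_gen[OF _ assms(2)] by (simp add: connected_order_def)
  then have "\<forall>S\<in>set Out. is_schedule V E S"
      and "\<forall>S. is_schedule V E S \<longrightarrow> (\<exists>S'\<in>set Out. sched_equiv V E S S')"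
    unfolding schedule_transversal_def by simp_all
  then show ?thesis
    using schedule_transversal_nth[OF Out] by blast
qed

end
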